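(* Let $(X,d,\mu)$ be a metric median algebra and let $M\subseteq N$ be finite median subalgebras of $(X,\mu)$. Then $d^M_\mu(x,y)\le d^N_\mu(x,y)$ for all $x,y\in X$.
   Context: A median algebra is a set with a ternary operation $\mu$ such that $\mu(x,y,z)=\mu(x,z,y)=\mu(y,z,x)$, $\mu(x,x,y)=x$ and $\mu(\mu(x,y,z),u,v)=\mu(x,\mu(y,u,v),\mu(z,u,v))$. The median interval is $I(x,y)=\{z:\mu(x,y,z)=z\}$; a subset is convex if it contains $I(a,b)$ for all its elements $a,b$; a subalgebra is a subset closed under $\mu$. A wall of a median algebra $M$ is a partition $M=h\sqcup h^c$ into two non-empty convex subsets; it separates $a,b$ if they lie in different parts; $\mathcal{W}(M)$ is the set of walls and $\mathcal{W}^M(a|b)$ the set of walls separating $a,b$. For a finite median algebra $M$, an edge is a pair $\{x,y\}\subseteq M$ separated by exactly one wall of $M$. A metric median algebra $(X,d,\mu)$ is a median algebra with a metric $d$ for which $\mu$ is continuous. For a finite subalgebra $M\subseteq X$ and $W\in\mathcal{W}(M)$, let $\lambda^M_{\max}(W)=\max d(a,b)$ over edges $\{a,b\}$ of $M$ separated by $W$; for $x,y\in X$ set $d^M_\mu(x,y)=\sum_{W\in\mathcal{W}^M(x|y)}\lambda^M_{\max}(W)$ if $x,y\in M$, and $d^M_\mu(x,y)=0$ otherwise. *)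

theory Defs
  imports "HOL-Analysis.Analysis"
begin

definition median_algebra :: "('a \<Rightarrow> 'a \<Rightarrow> 'a \<Rightarrow> 'a) \<Rightarrow> bool" where
  "median_algebra \<mu> \<longleftrightarrow>
     (\<forall>x y z. \<mu> x y z = \<mu> x z y \<and> \<mu> x y z = \<mu> y z x) \<and>
     (\<forall>x y. \<mu> x x y = x) \<and>
     (\<forall>x y z u v. \<mu> (\<mu> x y z) u v = \<mu> x (\<mu> y u v) (\<mu> z u v))"

definition metric_median_algebra :: "('a::metric_space \<Rightarrow> 'a \<Rightarrow> 'a \<Rightarrow> 'a) \<Rightarrow> bool" where
  "metric_median_algebra \<mu> \<longleftrightarrow> median_algebra \<mu> \<and>
     continuous_on UNIV (\<lambda>(x, y, z). \<mu> x y z)"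

definition median_interval :: "('a \<Rightarrow> 'a \<Rightarrow> 'a \<Rightarrow> 'a) \<Rightarrow> 'a \<Rightarrow> 'a \<Rightarrow> 'a set" where
  "median_interval \<mu> x y = {z. \<mu> x y z = z}"

definition subalgebra :: "('a \<Rightarrow> 'a \<Rightarrow> 'a \<Rightarrow> 'a) \<Rightarrow> 'a set \<Rightarrow> bool" where
  "subalgebra \<mu> S \<longleftrightarrow> (\<forall>x\<in>S. \<forall>y\<in>S. \<forall>z\<in>S. \<mu> x y z \<in> S)"

text \<open>Convexity of a subset C of the median algebra M (with the restricted median):
  the interval of M between a and b is the median interval intersected with M.\<close>
definition convex_in :: "('a \<Rightarrow> 'a \<Rightarrow> 'a \<Rightarrow> 'a) \<Rightarrow> 'a set \<Rightarrow> 'a set \<Rightarrow> bool" where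
  "convex_in \<mu> M C \<longleftrightarrow> C \<subseteq> M \<and> (\<forall>a\<in>C. \<forall>b\<in>C. median_interval \<mu> a b \<inter> M \<subseteq> C)"

definition walls :: "('a \<Rightarrow> 'a \<Rightarrow> 'a \<Rightarrow> 'a) \<Rightarrow> 'a set \<Rightarrow> 'a set set set" where
  "walls \<mu> M = {{h, M - h} | h. h \<subseteq> M \<and> h \<noteq> {} \<and> M - h \<noteq> {} \<and>
                   convex_in \<mu> M h \<and> convex_in \<mu> M (M - h)}"

definition separates :: "'a set set \<Rightarrow> 'a \<Rightarrow> 'a \<Rightarrow> bool" where
  "separates W a b \<longleftrightarrow> (\<exists>h\<in>W. a \<in> h \<and> b \<notin> h)"

definition sep_walls :: "('a \<Rightarrow> 'a \<Rightarrow> 'a \<Rightarrow> 'a) \<Rightarrow> 'a set \<Rightarrow> 'a \<Rightarrow> 'a \<Rightarrow> 'a set set set" where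
  "sep_walls \<mu> M a b = {W \<in> walls \<mu> M. separates W a b}"

definition is_edge :: "('a \<Rightarrow> 'a \<Rightarrow> 'a \<Rightarrow> 'a) \<Rightarrow> 'a set \<Rightarrow> 'a \<Rightarrow> 'a \<Rightarrow> bool" where
  "is_edge \<mu> M a b \<longleftrightarrow> a \<in> M \<and> b \<in> M \<and> card (sep_walls \<mu> M a b) = 1"

definition lambda_max :: "('a::metric_space \<Rightarrow> 'a \<Rightarrow> 'a \<Rightarrow> 'a) \<Rightarrow> 'a set \<Rightarrow> 'a set set \<Rightarrow> real" where
  "lambda_max \<mu> M W = Max {dist a b | a b. is_edge \<mu> M a b \<and> separates W a b}"

definition d_mu :: "('a::metric_space \<Rightarrow> 'a \<Rightarrow> 'a \<Rightarrow> 'a) \<Rightarrow> 'a set \<Rightarrow> 'a \<Rightarrow> 'a \<Rightarrow> real" where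
  "d_mu \<mu> M x y = (if x \<in> M \<and> y \<in> M then (\<Sum>W\<in>sep_walls \<mu> M x y. lambda_max \<mu> M W) else 0)"

end

theory Submission
  imports Defs
begin

(* For a wall W of M separating x and y, the weight of W is attained on an edge {a, b} of M.
   Splitting the interval [a, b] at interior points of N and using the triangle inequality,
   d(a, b) is at most the total N-weight of the N-walls separating a and b.  Each of these
   restricts to a wall of M separating a and b, which must be W because {a, b} is an edge; and
   it separates x and y because W does.  Grouping the N-walls separating x and y by their
   restriction to M, each group therefore outweighs the corresponding M-wall. *)

lemma in_median_interval_iff: "z \<in> median_interval \<mu> a b \<longleftrightarrow> \<mu> a b z = z"
  unfolding median_interval_def by simp

lemma convex_inD:
  "convex_in \<mu> M K \<Longrightarrow> a \<in> K \<Longrightarrow> b \<in> K \<Longrightarrow> z \<in> M \<Longrightarrow> z \<in> median_interval \<mu> a b \<Longrightarrow> z \<in> K"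
  unfolding convex_in_def by blast

lemma wallD:
  assumes "W \<in> walls \<mu> M" "K \<in> W"
  shows "W = {K, M - K}" "K \<subseteq> M" "K \<noteq> {}" "M - K \<noteq> {}"
    "convex_in \<mu> M K" "convex_in \<mu> M (M - K)"
proof -
  obtain h where h: "W = {h, M - h}" "h \<subseteq> M" "h \<noteq> {}" "M - h \<noteq> {}"
    "convex_in \<mu> M h" "convex_in \<mu> M (M - h)"
    using assms(1) unfolding walls_def by blast
  have "M - (M - h) = h" using h(2) by blast
  moreover have "K = h \<or> K = M - h" using assms(2) h(1) by blast
  ultimately show "W = {K, M - K}" "K \<subseteq> M" "K \<noteq> {}" "M - K \<noteq> {}"
    "convex_in \<mu> M K" "convex_in \<mu> M (M - K)"
    using h by (metis Diff_subset insert_commute)+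
qed

lemma wall_nonempty: "W \<in> walls \<mu> M \<Longrightarrow> \<exists>K. K \<in> W"
  unfolding walls_def by blast

lemma finite_sep_walls:
  assumes "finite M"
  shows "finite (sep_walls \<mu> M a b)"
proof -
  have "sep_walls \<mu> M a b \<subseteq> Pow (Pow M)" unfolding sep_walls_def walls_def by blast
  then show ?thesis using assms by (meson finite_Pow_iff finite_subset)
qed

lemma separates_wall_iff:
  assumes "W \<in> walls \<mu> M" "K \<in> W" "a \<in> M" "b \<in> M"
  shows "separates W a b \<longleftrightarrow> (a \<in> K \<longleftrightarrow> b \<notin> K)"
  using wallD(1)[OF assms(1,2)] assms(3,4) unfolding separates_def by auto

lemma wall_side_convex:
  assumes "W \<in> walls \<mu> M" "K \<in> W" "a \<in> M" "b \<in> M" "c \<in> M" "c \<in> median_interval \<mu> a b"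
  shows "a \<in> K \<Longrightarrow> b \<in> K \<Longrightarrow> c \<in> K"
    and "a \<notin> K \<Longrightarrow> b \<notin> K \<Longrightarrow> c \<notin> K"
  using convex_inD[OF wallD(5)[OF assms(1,2)]] convex_inD[OF wallD(6)[OF assms(1,2)]] assms(3-6)
  by blast+

lemma sep_walls_median_interval:
  assumes "a \<in> M" "b \<in> M" "c \<in> median_interval \<mu> a b \<inter> M"
  shows "sep_walls \<mu> M a b = sep_walls \<mu> M a c \<union> sep_walls \<mu> M c b"
    and "sep_walls \<mu> M a c \<inter> sep_walls \<mu> M c b = {}"
proof -
  have *: "separates W a b \<longleftrightarrow> separates W a c \<or> separates W c b"
    "\<not> (separates W a c \<and> separates W c b)" if W: "W \<in> walls \<mu> M" for W
  proof -
    obtain K where K: "K \<in> W" using wall_nonempty[OF W] by blast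
    have c: "c \<in> M" "c \<in> median_interval \<mu> a b" using assms(3) by auto
    note side = wall_side_convex[OF W K assms(1,2) c]
    note sep = separates_wall_iff[OF W K]
    show "separates W a b \<longleftrightarrow> separates W a c \<or> separates W c b"
      "\<not> (separates W a c \<and> separates W c b)"
      using side sep[OF assms(1,2)] sep[OF assms(1) c(1)] sep[OF c(1) assms(2)] by blast+
  qed
  show "sep_walls \<mu> M a b = sep_walls \<mu> M a c \<union> sep_walls \<mu> M c b"
    "sep_walls \<mu> M a c \<inter> sep_walls \<mu> M c b = {}"
    unfolding sep_walls_def using * by auto
qed

locale median_structure =
  fixes \<mu> :: "'a \<Rightarrow> 'a \<Rightarrow> 'a \<Rightarrow> 'a"
  assumes median_algebra: "median_algebra \<mu>"
begin

lemma median_commute: "\<mu> x y z = \<mu> x z y" "\<mu> x y z = \<mu> y z x" "\<mu> x y z = \<mu> y x z"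
  using median_algebra unfolding median_algebra_def by metis+

lemma median_majority [simp]: "\<mu> x x y = x" "\<mu> x y x = x" "\<mu> y x x = x"
  using median_algebra median_commute unfolding median_algebra_def by metis+

lemma median_distrib: "\<mu> (\<mu> x y z) u v = \<mu> x (\<mu> y u v) (\<mu> z u v)"
  using median_algebra unfolding median_algebra_def by blast

lemma median_interval_commute: "median_interval \<mu> a b = median_interval \<mu> b a"
  unfolding median_interval_def using median_commute by metis

lemma endpoints_in_median_interval: "a \<in> median_interval \<mu> a b" "b \<in> median_interval \<mu> a b"
  by (simp_all add: in_median_interval_iff)

lemma median_in_median_interval: "\<mu> a b z \<in> median_interval \<mu> a b"
proof -
  have "\<mu> (\<mu> z a b) a b = \<mu> z (\<mu> a a b) (\<mu> b a b)" by (rule median_distrib)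
  then show ?thesis unfolding in_median_interval_iff by (metis median_commute(1,2) median_majority(1,3))
qed

lemma median_interval_subset:
  assumes "c \<in> median_interval \<mu> a b"
  shows "median_interval \<mu> a c \<subseteq> median_interval \<mu> a b"
proof
  fix z assume "z \<in> median_interval \<mu> a c"
  moreover have "\<mu> (\<mu> z a c) a b = \<mu> z (\<mu> a a b) (\<mu> c a b)" by (rule median_distrib)
  ultimately show "z \<in> median_interval \<mu> a b"
    using assms unfolding in_median_interval_iff by (metis median_commute(1,2) median_majority(1))
qed

lemma median_interval_psubset:
  assumes "c \<in> median_interval \<mu> a b" "c \<noteq> b" "b \<in> M"
  shows "median_interval \<mu> a c \<inter> M \<subset> median_interval \<mu> a b \<inter> M"
proof -
  have "b \<notin> median_interval \<mu> a c"
    using assms(1,2) median_commute(1)[of a b c] unfolding in_median_interval_iff by metis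
  then show ?thesis
    using median_interval_subset[OF assms(1)] endpoints_in_median_interval(2) assms(3) by blast
qed

lemma card_median_interval_less:
  assumes "finite M" "a \<in> M" "b \<in> M" "c \<in> median_interval \<mu> a b" "c \<noteq> a" "c \<noteq> b"
  shows "card (median_interval \<mu> a c \<inter> M) < card (median_interval \<mu> a b \<inter> M)"
    and "card (median_interval \<mu> c b \<inter> M) < card (median_interval \<mu> a b \<inter> M)"
proof -
  show "card (median_interval \<mu> a c \<inter> M) < card (median_interval \<mu> a b \<inter> M)"
    using median_interval_psubset[OF assms(4,6,3)] assms(1) by (simp add: psubset_card_mono)
  have "c \<in> median_interval \<mu> b a" using assms(4) median_interval_commute by blast
  from median_interval_psubset[OF this assms(5,2)] assms(1)
  show "card (median_interval \<mu> c b \<inter> M) < card (median_interval \<mu> a b \<inter> M)"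
    by (simp add: psubset_card_mono median_interval_commute)
qed

lemma median_interval_induct [consumes 3, case_names minimal split]:
  assumes "finite M" "a \<in> M" "b \<in> M"
    and minimal: "\<And>a b. a \<in> M \<Longrightarrow> b \<in> M \<Longrightarrow> median_interval \<mu> a b \<inter> M \<subseteq> {a, b} \<Longrightarrow> P a b"
    and split: "\<And>a b c. a \<in> M \<Longrightarrow> b \<in> M \<Longrightarrow> c \<in> median_interval \<mu> a b \<inter> M \<Longrightarrow>
      c \<noteq> a \<Longrightarrow> c \<noteq> b \<Longrightarrow> P a c \<Longrightarrow> P c b \<Longrightarrow> P a b"
  shows "P a b"
  using assms(2,3)
proof (induction "card (median_interval \<mu> a b \<inter> M)" arbitrary: a b rule: less_induct)
  case less
  show ?case
  proof (cases "median_interval \<mu> a b \<inter> M \<subseteq> {a, b}")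
    case True
    then show ?thesis using minimal less.prems by blast
  next
    case False
    then obtain c where c: "c \<in> median_interval \<mu> a b \<inter> M" "c \<noteq> a" "c \<noteq> b" by blast
    note smaller = card_median_interval_less[OF assms(1) less.prems _ c(2,3)]
    show ?thesis
      using split[OF less.prems c] less.hyps smaller c(1) less.prems by blast
  qed
qed

lemma halfspace_convex:
  assumes proj: "\<And>z. z \<in> M \<Longrightarrow> \<mu> a b z \<in> {a, b}" and e: "e \<in> {a, b}"
  shows "convex_in \<mu> M {z \<in> M. \<mu> a b z = e}"
  unfolding convex_in_def
proof (intro conjI ballI subsetI)
  fix p q z assume p: "p \<in> {z \<in> M. \<mu> a b z = e}" and q: "q \<in> {z \<in> M. \<mu> a b z = e}"
    and z: "z \<in> median_interval \<mu> p q \<inter> M"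
  have "\<mu> p a b = e" "\<mu> p b a = e" "\<mu> q a b = e"
    using p q median_commute(1)[of p b a] median_commute(2)[of p a b] median_commute(2)[of q a b]
    by simp_all
  then have absorb: "\<mu> p e w = e" if "w \<in> {a, b}" for w using that e by auto
  have "\<mu> a b z = \<mu> z a b" using median_commute(2)[of z a b] by simp
  also have "\<dots> = \<mu> (\<mu> p q z) a b" using z by (simp add: in_median_interval_iff)
  also have "\<dots> = \<mu> p e (\<mu> z a b)" by (simp add: median_distrib \<open>\<mu> q a b = e\<close>)
  also have "\<dots> = e" using absorb proj[of z] z median_commute(2)[of z a b] by simp
  finally have "\<mu> a b z = e" .
  then show "z \<in> {z \<in> M. \<mu> a b z = e}" using z by blast
qed auto

context
  fixes M a b
  assumes subalgebra: "subalgebra \<mu> M" and ab: "a \<in> M" "b \<in> M" "a \<noteq> b"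
    and minimal: "median_interval \<mu> a b \<inter> M \<subseteq> {a, b}"
begin

(* The interval condition makes z \<mapsto> \<mu> a b z a retraction of M onto {a, b}; its two fibres
   are the halfspaces of the only wall separating a and b. *)
private definition H where "H = {z \<in> M. \<mu> a b z = a}"

private lemma proj: "z \<in> M \<Longrightarrow> \<mu> a b z \<in> {a, b}"
  using subalgebra ab minimal median_in_median_interval unfolding subalgebra_def by blast

private lemma complement_H: "M - H = {z \<in> M. \<mu> a b z = b}"
  unfolding H_def using proj ab(3) by auto

private lemma H_wall: "{H, M - H} \<in> walls \<mu> M"
proof -
  have "convex_in \<mu> M H" "convex_in \<mu> M (M - H)"
    unfolding complement_H unfolding H_def using halfspace_convex[OF proj] by simp_all
  moreover have "a \<in> H" "b \<in> M - H" unfolding complement_H using ab by (auto simp: H_def)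
  ultimately show ?thesis unfolding walls_def H_def by blast
qed

private lemma separating_wall_eq_H:
  assumes W: "W \<in> walls \<mu> M" and "separates W a b"
  shows "W = {H, M - H}"
proof -
  obtain K where K: "K \<in> W" "a \<in> K" "b \<notin> K" using assms(2) unfolding separates_def by blast
  have "z \<in> K \<longleftrightarrow> \<mu> a b z = a" if z: "z \<in> M" for z
  proof
    assume "z \<in> K"
    moreover have "b \<in> median_interval \<mu> a z" if "\<mu> a b z = b"
      using that median_commute(1) unfolding in_median_interval_iff by metis
    ultimately show "\<mu> a b z = a"
      using proj[OF z] wall_side_convex(1)[OF W K(1) ab(1) z ab(2)] K by blast
  next
    assume "\<mu> a b z = a"
    then have "a \<in> median_interval \<mu> b z"
      using median_commute(2) unfolding in_median_interval_iff by metis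
    then show "z \<in> K"
      using wall_side_convex(2)[OF W K(1) ab(2) z ab(1)] K by blast
  qed
  then have "K = H" using wallD(2)[OF W K(1)] unfolding H_def by blast
  then show ?thesis using wallD(1)[OF W K(1)] by simp
qed

lemma is_edge_if_minimal_interval: "is_edge \<mu> M a b"
proof -
  have "separates {H, M - H} a b" unfolding separates_def complement_H using ab by (auto simp: H_def)
  then have "sep_walls \<mu> M a b = {{H, M - H}}"
    using H_wall separating_wall_eq_H unfolding sep_walls_def by blast
  then show ?thesis unfolding is_edge_def using ab by simp
qed

end

lemma wall_has_edge:
  assumes "finite M" "subalgebra \<mu> M" "W \<in> walls \<mu> M"
  shows "\<exists>a b. is_edge \<mu> M a b \<and> separates W a b"
proof -
  obtain K where K: "K \<in> W" using wall_nonempty[OF assms(3)] by blast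
  then obtain x y where xy: "x \<in> K" "y \<in> M - K" using wallD(3,4)[OF assms(3)] by blast
  then have "x \<in> M" "y \<in> M" "separates W x y"
    using wallD(2)[OF assms(3) K] K unfolding separates_def by blast+
  moreover have "separates W x y \<longrightarrow> (\<exists>a b. is_edge \<mu> M a b \<and> separates W a b)"
    using assms(1) \<open>x \<in> M\<close> \<open>y \<in> M\<close>
  proof (induction rule: median_interval_induct)
    case (minimal a b)
    then show ?case using is_edge_if_minimal_interval[OF assms(2)] unfolding separates_def by blast
  next
    case (split a b c)
    then show ?case using sep_walls_median_interval(1)[of a M b c] assms(3) unfolding sep_walls_def by blast
  qed
  ultimately show ?thesis by blast
qed

end

lemma finite_edge_lengths:
  fixes \<mu> :: "'a::metric_space \<Rightarrow> 'a \<Rightarrow> 'a \<Rightarrow> 'a"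
  assumes "finite M"
  shows "finite {dist a b | a b. is_edge \<mu> M a b \<and> separates W a b}"
proof -
  have "{dist a b | a b. is_edge \<mu> M a b \<and> separates W a b} \<subseteq> (\<lambda>(a, b). dist a b) ` (M \<times> M)"
    unfolding is_edge_def by auto
  then show ?thesis using assms finite_subset by blast
qed

lemma dist_le_lambda_max:
  fixes \<mu> :: "'a::metric_space \<Rightarrow> 'a \<Rightarrow> 'a \<Rightarrow> 'a"
  assumes "finite M" "is_edge \<mu> M a b" "separates W a b"
  shows "dist a b \<le> lambda_max \<mu> M W"
  unfolding lambda_max_def using assms finite_edge_lengths[OF assms(1)]
  by (intro Max_ge) blast+

lemma is_edge_sep_walls:
  assumes "is_edge \<mu> M a b" "W \<in> sep_walls \<mu> M a b"
  shows "sep_walls \<mu> M a b = {W}"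
  using assms unfolding is_edge_def by (metis card_1_singletonE singletonD)

lemma dist_le_d_mu_edge:
  fixes \<mu> :: "'a::metric_space \<Rightarrow> 'a \<Rightarrow> 'a \<Rightarrow> 'a"
  assumes "finite M" "is_edge \<mu> M a b"
  shows "dist a b \<le> d_mu \<mu> M a b"
proof -
  obtain W where W: "sep_walls \<mu> M a b = {W}"
    using assms(2) unfolding is_edge_def by (meson card_1_singletonE)
  then have "separates W a b" unfolding sep_walls_def by blast
  then show ?thesis
    using dist_le_lambda_max[OF assms] W assms(2) unfolding d_mu_def is_edge_def by simp
qed

lemma d_mu_median_interval:
  assumes "finite M" "a \<in> M" "b \<in> M" "c \<in> median_interval \<mu> a b \<inter> M"
  shows "d_mu \<mu> M a b = d_mu \<mu> M a c + d_mu \<mu> M c b"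
  using assms sep_walls_median_interval[OF assms(2-4)]
  by (simp add: d_mu_def sum.union_disjoint finite_sep_walls)

definition restrict_wall :: "'a set \<Rightarrow> 'a set set \<Rightarrow> 'a set set" where
  "restrict_wall M W = (\<lambda>h. h \<inter> M) ` W"

lemma convex_in_restrict:
  assumes "convex_in \<mu> N K" "M \<subseteq> N"
  shows "convex_in \<mu> M (K \<inter> M)"
  using assms unfolding convex_in_def by blast

lemma restrict_wall_sep_walls:
  assumes "M \<subseteq> N" "a \<in> M" "b \<in> M" "V \<in> sep_walls \<mu> N a b"
  shows "restrict_wall M V \<in> sep_walls \<mu> M a b"
proof -
  have V: "V \<in> walls \<mu> N" "separates V a b" using assms(4) unfolding sep_walls_def by auto
  then obtain K where K: "K \<in> V" "a \<in> K" "b \<notin> K" unfolding separates_def by blast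
  have "(N - K) \<inter> M = M - K \<inter> M" using assms(1) by blast
  then have eq: "restrict_wall M V = {K \<inter> M, M - K \<inter> M}"
    unfolding restrict_wall_def using wallD(1)[OF V(1) K(1)] by simp
  have "convex_in \<mu> M (K \<inter> M)" "convex_in \<mu> M (M - K \<inter> M)"
    using convex_in_restrict[OF wallD(5)[OF V(1) K(1)] assms(1)]
      convex_in_restrict[OF wallD(6)[OF V(1) K(1)] assms(1)] \<open>(N - K) \<inter> M = M - K \<inter> M\<close>
    by simp_all
  moreover have "K \<inter> M \<noteq> {}" "M - K \<inter> M \<noteq> {}" using K assms(2,3) by blast+
  ultimately have "{K \<inter> M, M - K \<inter> M} \<in> walls \<mu> M"
    unfolding walls_def by (intro CollectI exI[of _ "K \<inter> M"]) simp
  moreover have "separates {K \<inter> M, M - K \<inter> M} a b"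
    unfolding separates_def using K assms(2) by simp
  ultimately show ?thesis unfolding sep_walls_def eq by simp
qed

lemma separates_restrict_wallD:
  assumes "separates (restrict_wall M V) x y" "y \<in> M"
  shows "separates V x y"
proof -
  obtain k where k: "k \<in> restrict_wall M V" "x \<in> k" "y \<notin> k"
    using assms(1) unfolding separates_def by blast
  then obtain h where "h \<in> V" "k = h \<inter> M" unfolding restrict_wall_def by blast
  then show ?thesis using k assms(2) unfolding separates_def by blast
qed

locale metric_median_structure = median_structure \<mu>
  for \<mu> :: "'a::metric_space \<Rightarrow> 'a \<Rightarrow> 'a \<Rightarrow> 'a"
begin

lemma lambda_max_attained:
  assumes "finite M" "subalgebra \<mu> M" "W \<in> walls \<mu> M"
  obtains a b where "is_edge \<mu> M a b" "separates W a b" "lambda_max \<mu> M W = dist a b"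
proof -
  have "lambda_max \<mu> M W \<in> {dist a b | a b. is_edge \<mu> M a b \<and> separates W a b}"
    unfolding lambda_max_def using finite_edge_lengths[OF assms(1)] wall_has_edge[OF assms]
    by (intro Max_in) blast+
  then show ?thesis using that by blast
qed

lemma lambda_max_nonneg:
  assumes "finite M" "subalgebra \<mu> M" "W \<in> walls \<mu> M"
  shows "0 \<le> lambda_max \<mu> M W"
  by (metis lambda_max_attained[OF assms] zero_le_dist)

lemma d_mu_nonneg:
  assumes "finite M" "subalgebra \<mu> M"
  shows "0 \<le> d_mu \<mu> M x y"
  unfolding d_mu_def sep_walls_def
  by (auto intro!: sum_nonneg lambda_max_nonneg[OF assms])

lemma dist_le_d_mu:
  assumes "finite M" "subalgebra \<mu> M" "a \<in> M" "b \<in> M"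
  shows "dist a b \<le> d_mu \<mu> M a b"
  using assms(1,3,4)
proof (induction rule: median_interval_induct)
  case (minimal a b)
  show ?case
  proof (cases "a = b")
    case True
    then show ?thesis using d_mu_nonneg[OF assms(1,2)] by simp
  next
    case False
    then show ?thesis
      using dist_le_d_mu_edge[OF assms(1) is_edge_if_minimal_interval[OF assms(2)]] minimal by blast
  qed
next
  case (split a b c)
  have "dist a b \<le> dist a c + dist c b" by (rule dist_triangle)
  also have "\<dots> \<le> d_mu \<mu> M a c + d_mu \<mu> M c b" using split.IH by simp
  also have "\<dots> = d_mu \<mu> M a b" using d_mu_median_interval[OF assms(1) split.hyps(1-3)] by simp
  finally show ?case .
qed

lemma lambda_max_le_sum_restrict_wall:
  assumes "finite N" "subalgebra \<mu> N" "M \<subseteq> N" "subalgebra \<mu> M" "y \<in> M"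
    and W: "W \<in> sep_walls \<mu> M x y"
  shows "lambda_max \<mu> M W \<le> (\<Sum>V\<in>{V \<in> sep_walls \<mu> N x y. restrict_wall M V = W}. lambda_max \<mu> N V)"
proof -
  have "finite M" using assms(1,3) finite_subset by blast
  obtain a b where ab: "is_edge \<mu> M a b" "separates W a b" "lambda_max \<mu> M W = dist a b"
    using lambda_max_attained[OF \<open>finite M\<close> assms(4)] W unfolding sep_walls_def by blast
  have a: "a \<in> M" "b \<in> M" using ab(1) unfolding is_edge_def by auto
  have sep_M: "sep_walls \<mu> M a b = {W}"
    using is_edge_sep_walls[OF ab(1)] ab(2) W unfolding sep_walls_def by blast
  have fibre: "sep_walls \<mu> N a b \<subseteq> {V \<in> sep_walls \<mu> N x y. restrict_wall M V = W}"
  proof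
    fix V assume V: "V \<in> sep_walls \<mu> N a b"
    then have "restrict_wall M V = W" using restrict_wall_sep_walls[OF assms(3) a V] sep_M by blast
    then have "separates V x y"
      using separates_restrict_wallD[of M V x y] W assms(5) unfolding sep_walls_def by simp
    then show "V \<in> {V \<in> sep_walls \<mu> N x y. restrict_wall M V = W}"
      using V \<open>restrict_wall M V = W\<close> unfolding sep_walls_def by blast
  qed
  have "lambda_max \<mu> M W \<le> d_mu \<mu> N a b"
    using ab(3) dist_le_d_mu[OF assms(1,2)] a assms(3) by auto
  also have "\<dots> = (\<Sum>V\<in>sep_walls \<mu> N a b. lambda_max \<mu> N V)"
    using a assms(3) unfolding d_mu_def by auto
  also have "\<dots> \<le> (\<Sum>V\<in>{V \<in> sep_walls \<mu> N x y. restrict_wall M V = W}. lambda_max \<mu> N V)"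
  proof (rule sum_mono2[OF _ fibre])
    show "finite {V \<in> sep_walls \<mu> N x y. restrict_wall M V = W}"
      using finite_sep_walls[OF assms(1)] by simp
  qed (auto simp: sep_walls_def intro: lambda_max_nonneg[OF assms(1,2)])
  finally show ?thesis .
qed

end

theorem lemma3p4:
  fixes \<mu> :: "'a::metric_space \<Rightarrow> 'a \<Rightarrow> 'a \<Rightarrow> 'a" and M N :: "'a set" and x y :: 'a
  assumes "metric_median_algebra \<mu>"
    and "finite M" and "finite N" and "M \<subseteq> N"
    and "subalgebra \<mu> M" and "subalgebra \<mu> N"
  shows "d_mu \<mu> M x y \<le> d_mu \<mu> N x y"
proof -
  interpret metric_median_structure \<mu>
    using assms(1) by unfold_locales (simp add: metric_median_algebra_def)
  show ?thesis
  proof (cases "x \<in> M \<and> y \<in> M")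
    case False
    then have "d_mu \<mu> M x y = 0" unfolding d_mu_def by auto
    then show ?thesis using d_mu_nonneg[OF assms(3,6)] by simp
  next
    case True
    let ?fibre = "\<lambda>W. {V \<in> sep_walls \<mu> N x y. restrict_wall M V = W}"
    have "d_mu \<mu> M x y = (\<Sum>W\<in>sep_walls \<mu> M x y. lambda_max \<mu> M W)"
      using True by (simp add: d_mu_def)
    also have "\<dots> \<le> (\<Sum>W\<in>sep_walls \<mu> M x y. \<Sum>V\<in>?fibre W. lambda_max \<mu> N V)"
      using lambda_max_le_sum_restrict_wall[OF assms(3,6,4,5)] True by (simp add: sum_mono)
    also have "\<dots> = (\<Sum>V\<in>sep_walls \<mu> N x y. lambda_max \<mu> N V)"
    proof (rule sum.group)
      show "restrict_wall M ` sep_walls \<mu> N x y \<subseteq> sep_walls \<mu> M x y"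
        using restrict_wall_sep_walls[OF assms(4)] True by blast
    qed (simp_all add: finite_sep_walls assms(2,3))
    also have "\<dots> = d_mu \<mu> N x y"
      using True assms(4) by (auto simp: d_mu_def)
    finally show ?thesis .
  qed
qed

end
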